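(* Let $G_1$ and $G_2$ be two vertex-disjoint simple connected graphs with $|V(G_1)|=n_1$, $|V(G_2)|=n_2$, $|E(G_1)|=m_1$, $|E(G_2)|=m_2$. Then the vertex Q-join $G_1\dot{\vee}_Q G_2$ satisfies \[ F(G_1\dot{\vee}_Q G_2)=F(G_1)+F(G_2)+3n_2M_1(G_1)+3n_1M_1(G_2)+M_4(G_1)+3\,ReZM(G_1)+6m_1n_2^{2}+6m_2n_1^{2}+n_1n_2(n_1^2+n_2^2). \]
   Context: For a simple graph $G$ and $v\in V(G)$, $d_G(v)$ is the degree of $v$. Define $M_1(G)=\sum_{v\in V(G)}d_G(v)^2$, $F(G)=\sum_{v\in V(G)}d_G(v)^3$, $M_4(G)=\sum_{v\in V(G)}d_G(v)^4$, and $ReZM(G)=\sum_{uv\in E(G)}d_G(u)d_G(v)\,[d_G(u)+d_G(v)]$. The graph $Q(G)$ is obtained from $G$ by inserting a new vertex into each edge of $G$ (subdividing it) and then joining by an edge each pair of new vertices that lie on adjacent edges of $G$ (edges sharing an end vertex); let $I(G)$ denote the set of these new vertices, so $V(Q(G))=V(G)\cup I(G)$. The vertex Q-join $G_1\dot{\vee}_Q G_2$ is the graph obtained from $Q(G_1)$ and $G_2$ (taken vertex-disjoint) by joining each vertex of $V(G_1)$ to every vertex of $G_2$ by an edge. *)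

theory Defs
  imports Main
begin

definition simple_graph :: "'a set \<Rightarrow> 'a set set \<Rightarrow> bool" where
  "simple_graph V E \<longleftrightarrow> finite V \<and>
     (\<forall>e\<in>E. \<exists>u v. u \<in> V \<and> v \<in> V \<and> u \<noteq> v \<and> e = {u, v})"

definition adj_rel :: "'a set set \<Rightarrow> ('a \<times> 'a) set" where
  "adj_rel E = {(u, v). {u, v} \<in> E}"

definition connected_graph :: "'a set \<Rightarrow> 'a set set \<Rightarrow> bool" where
  "connected_graph V E \<longleftrightarrow> V \<noteq> {} \<and> (\<forall>u\<in>V. \<forall>v\<in>V. (u, v) \<in> (adj_rel E)\<^sup>*)"

definition degree :: "'a set set \<Rightarrow> 'a \<Rightarrow> nat" where
  "degree E v = card {e \<in> E. v \<in> e}"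

definition M1 :: "'a set \<Rightarrow> 'a set set \<Rightarrow> nat" where
  "M1 V E = (\<Sum>v\<in>V. degree E v ^ 2)"

definition Fidx :: "'a set \<Rightarrow> 'a set set \<Rightarrow> nat" where
  "Fidx V E = (\<Sum>v\<in>V. degree E v ^ 3)"

definition M4 :: "'a set \<Rightarrow> 'a set set \<Rightarrow> nat" where
  "M4 V E = (\<Sum>v\<in>V. degree E v ^ 4)"

definition ReZM :: "'a set \<Rightarrow> 'a set set \<Rightarrow> nat" where
  "ReZM V E = (\<Sum>e\<in>E. (\<Prod>x\<in>e. degree E x) * (\<Sum>x\<in>e. degree E x))"

text \<open>Q(G): old vertices tagged Inl, new (edge) vertices tagged Inr.\<close>
definition Q_vertices :: "'a set \<Rightarrow> 'a set set \<Rightarrow> ('a + 'a set) set" where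
  "Q_vertices V E = Inl ` V \<union> Inr ` E"

definition Q_edges :: "'a set \<Rightarrow> 'a set set \<Rightarrow> ('a + 'a set) set set" where
  "Q_edges V E =
     {{Inl u, Inr e} | u e. e \<in> E \<and> u \<in> e} \<union>
     {{Inr e, Inr f} | e f. e \<in> E \<and> f \<in> E \<and> e \<noteq> f \<and> e \<inter> f \<noteq> {}}"

definition vQjoin_vertices :: "'a set \<Rightarrow> 'a set set \<Rightarrow> 'b set \<Rightarrow> (('a + 'a set) + 'b) set" where
  "vQjoin_vertices V1 E1 V2 = Inl ` Q_vertices V1 E1 \<union> Inr ` V2"

definition vQjoin_edges :: "'a set \<Rightarrow> 'a set set \<Rightarrow> 'b set \<Rightarrow> 'b set set
     \<Rightarrow> (('a + 'a set) + 'b) set set" where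
  "vQjoin_edges V1 E1 V2 E2 =
     (\<lambda>e. Inl ` e) ` Q_edges V1 E1 \<union> (\<lambda>e. Inr ` e) ` E2 \<union>
     {{Inl (Inl u), Inr w} | u w. u \<in> V1 \<and> w \<in> V2}"

end

theory Submission
  imports Defs
begin

text \<open>Every vertex of the join has an explicit degree: an old vertex u of G1 gets
  d(u) + n2, a vertex w of G2 gets d(w) + n1, and the vertex inserted into the edge
  uv of G1 gets d(u) + d(v) (two subdivision edges plus d(u) + d(v) - 2 adjacent edges).
  Summing cubes, expanding (d + n)^3 and using the handshake lemma gives the terms in
  F, M1, m and n; the inserted vertices contribute
  (d(u) + d(v))^3 = d(u)^3 + d(v)^3 + 3 d(u) d(v) (d(u) + d(v)), which sums to
  M4(G1) + 3 ReZM(G1) by double counting.\<close>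

lemma simple_graph_finite: "simple_graph V E \<Longrightarrow> finite V"
  unfolding simple_graph_def by blast

lemma simple_graph_edgeE:
  assumes "simple_graph V E" "e \<in> E"
  obtains u v where "u \<in> V" "v \<in> V" "u \<noteq> v" "e = {u, v}"
  using assms unfolding simple_graph_def by blast

lemma simple_graph_edge_subset: "simple_graph V E \<Longrightarrow> e \<in> E \<Longrightarrow> e \<subseteq> V"
  by (erule simple_graph_edgeE) auto

lemma simple_graph_finite_edges: "simple_graph V E \<Longrightarrow> finite E"
  by (meson Pow_iff finite_Pow_iff finite_subset simple_graph_edge_subset
        simple_graph_finite subsetI)

lemma simple_graph_card_edge: "simple_graph V E \<Longrightarrow> e \<in> E \<Longrightarrow> card e = 2"
  by (erule simple_graph_edgeE) auto

lemma sum_edges_endpoints_eq_sum_degree: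
  assumes "simple_graph V E"
  shows "(\<Sum>e\<in>E. \<Sum>x\<in>e. g x) = (\<Sum>v\<in>V. degree E v * (g v :: nat))"
proof -
  have "(\<Sum>e\<in>E. \<Sum>x\<in>e. g x) = (\<Sum>e\<in>E. \<Sum>x\<in>V. if x \<in> e then g x else 0)"
  proof (rule sum.cong[OF refl])
    fix e assume "e \<in> E"
    then have "{x \<in> V. x \<in> e} = e" using simple_graph_edge_subset[OF assms] by blast
    then show "(\<Sum>x\<in>e. g x) = (\<Sum>x\<in>V. if x \<in> e then g x else 0)"
      using sum.inter_filter[OF simple_graph_finite[OF assms], of g "\<lambda>x. x \<in> e"] by simp
  qed
  also have "\<dots> = (\<Sum>x\<in>V. \<Sum>e\<in>E. if x \<in> e then g x else 0)"
    by (rule sum.swap)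
  also have "\<dots> = (\<Sum>v\<in>V. degree E v * g v)"
    using simple_graph_finite_edges[OF assms] by (simp add: sum.inter_filter[symmetric] degree_def)
  finally show ?thesis .
qed

lemma sum_degree_eq_twice_card_edges:
  assumes "simple_graph V E"
  shows "(\<Sum>v\<in>V. degree E v) = 2 * card E"
  using sum_edges_endpoints_eq_sum_degree[OF assms, of "\<lambda>_. 1"]
  by (simp add: simple_graph_card_edge[OF assms])

lemma degree_Un:
  assumes "finite A" "finite B" "\<forall>e\<in>A \<inter> B. v \<notin> e"
  shows "degree (A \<union> B) v = degree A v + degree B v"
proof -
  have "{e \<in> A \<union> B. v \<in> e} = {e \<in> A. v \<in> e} \<union> {e \<in> B. v \<in> e}" by blast
  moreover have "{e \<in> A. v \<in> e} \<inter> {e \<in> B. v \<in> e} = {}" using assms(3) by blast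
  ultimately show ?thesis
    unfolding degree_def using assms(1,2) by (simp add: card_Un_disjoint)
qed

lemma degree_image_inj:
  assumes "inj f"
  shows "degree ((`) f ` F) (f x) = degree F x"
proof -
  have "{e \<in> (`) f ` F. f x \<in> e} = (`) f ` {e \<in> F. x \<in> e}"
    using assms by (auto simp: inj_image_mem_iff dest: injD)
  moreover have inj: "inj_on ((`) f) {e \<in> F. x \<in> e}"
    using assms by (auto intro: inj_onI simp: inj_image_eq_iff)
  ultimately show ?thesis unfolding degree_def by (simp add: card_image[OF inj])
qed

lemma degree_image_outside_range:
  assumes "x \<notin> range f"
  shows "degree ((`) f ` F) x = 0"
proof -
  have "{e \<in> (`) f ` F. x \<in> e} = {}" using assms by blast
  then show ?thesis unfolding degree_def by (simp only: card.empty)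
qed

definition biclique_edges :: "'a set \<Rightarrow> 'b set \<Rightarrow> ('a + 'b) set set" where
  "biclique_edges A B = {{Inl a, Inr b} | a b. a \<in> A \<and> b \<in> B}"

lemma finite_biclique_edges: "finite A \<Longrightarrow> finite B \<Longrightarrow> finite (biclique_edges A B)"
proof -
  assume "finite A" "finite B"
  moreover have "biclique_edges A B \<subseteq> (\<lambda>(a, b). {Inl a, Inr b}) ` (A \<times> B)"
    unfolding biclique_edges_def by auto
  ultimately show ?thesis by (meson finite_SigmaI finite_imageI finite_subset)
qed

lemma degree_biclique_edges_Inl:
  "degree (biclique_edges A B) (Inl a) = (if a \<in> A then card B else 0)"
proof -
  have "{e \<in> biclique_edges A B. Inl a \<in> e} =
      (if a \<in> A then (\<lambda>b. {Inl a, Inr b}) ` B else {})"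
    unfolding biclique_edges_def by auto
  moreover have inj: "inj_on (\<lambda>b. {Inl a, Inr b}) B"
    by (auto intro: inj_onI simp: doubleton_eq_iff)
  ultimately show ?thesis unfolding degree_def by (simp add: card_image[OF inj])
qed

lemma degree_biclique_edges_Inr:
  "degree (biclique_edges A B) (Inr b) = (if b \<in> B then card A else 0)"
proof -
  have "{e \<in> biclique_edges A B. Inr b \<in> e} =
      (if b \<in> B then (\<lambda>a. {Inl a, Inr b}) ` A else {})"
    unfolding biclique_edges_def by auto
  moreover have inj: "inj_on (\<lambda>a. {Inl a, Inr b}) A"
    by (auto intro: inj_onI simp: doubleton_eq_iff)
  ultimately show ?thesis unfolding degree_def by (simp add: card_image[OF inj])
qed

definition subdivision_edges :: "'a set set \<Rightarrow> ('a + 'a set) set set" where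
  "subdivision_edges E = {{Inl u, Inr e} | u e. e \<in> E \<and> u \<in> e}"

definition line_edges :: "'a set set \<Rightarrow> ('a + 'a set) set set" where
  "line_edges E = {{Inr e, Inr f} | e f. e \<in> E \<and> f \<in> E \<and> e \<noteq> f \<and> e \<inter> f \<noteq> {}}"

lemma Q_edges_eq: "Q_edges V E = subdivision_edges E \<union> line_edges E"
  unfolding Q_edges_def subdivision_edges_def line_edges_def ..

lemma finite_Q_edges:
  assumes "simple_graph V E"
  shows "finite (Q_edges V E)"
proof -
  have "Q_edges V E \<subseteq> (\<lambda>(x, y). {x, y}) ` (Q_vertices V E \<times> Q_vertices V E)"
    using simple_graph_edge_subset[OF assms]
    unfolding Q_edges_def Q_vertices_def by fastforce
  moreover have "finite (Q_vertices V E)"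
    unfolding Q_vertices_def
    using assms simple_graph_finite simple_graph_finite_edges by blast
  ultimately show ?thesis by (meson finite_SigmaI finite_imageI finite_subset)
qed

lemma degree_subdivision_edges_Inl: "degree (subdivision_edges E) (Inl u) = degree E u"
proof -
  have "{d \<in> subdivision_edges E. Inl u \<in> d} = (\<lambda>e. {Inl u, Inr e}) ` {e \<in> E. u \<in> e}"
    unfolding subdivision_edges_def by auto
  moreover have inj: "inj_on (\<lambda>e. {Inl u, Inr e}) {e \<in> E. u \<in> e}"
    by (auto intro: inj_onI simp: doubleton_eq_iff)
  ultimately show ?thesis unfolding degree_def by (simp add: card_image[OF inj])
qed

lemma degree_subdivision_edges_Inr: "e \<in> E \<Longrightarrow> degree (subdivision_edges E) (Inr e) = card e"
proof -
  assume "e \<in> E"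
  then have "{d \<in> subdivision_edges E. Inr e \<in> d} = (\<lambda>u. {Inl u, Inr e}) ` e"
    unfolding subdivision_edges_def by auto
  moreover have inj: "inj_on (\<lambda>u. {Inl u, Inr e}) e"
    by (auto intro: inj_onI simp: doubleton_eq_iff)
  ultimately show ?thesis unfolding degree_def by (simp add: card_image[OF inj])
qed

lemma degree_line_edges_Inl: "degree (line_edges E) (Inl u) = 0"
proof -
  have "{d \<in> line_edges E. Inl u \<in> d} = {}" unfolding line_edges_def by blast
  then show ?thesis unfolding degree_def by (simp only: card.empty)
qed

lemma degree_line_edges_Inr:
  "e \<in> E \<Longrightarrow> degree (line_edges E) (Inr e) = card {f \<in> E. f \<noteq> e \<and> f \<inter> e \<noteq> {}}"
proof -
  assume "e \<in> E"
  then have "{d \<in> line_edges E. Inr e \<in> d} =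
      (\<lambda>f. {Inr e, Inr f}) ` {f \<in> E. f \<noteq> e \<and> f \<inter> e \<noteq> {}}"
    unfolding line_edges_def by (auto simp: doubleton_eq_iff)
  moreover have inj: "inj_on (\<lambda>f. {Inr e, Inr f}) {f \<in> E. f \<noteq> e \<and> f \<inter> e \<noteq> {}}"
    by (auto intro: inj_onI simp: doubleton_eq_iff)
  ultimately show ?thesis unfolding degree_def by (simp add: card_image[OF inj])
qed

text \<open>The edges meeting e = {a, b} are those at a or at b; only e itself is at both.\<close>
lemma card_adjacent_edges:
  assumes g: "simple_graph V E" and e: "e \<in> E"
  shows "card {f \<in> E. f \<noteq> e \<and> f \<inter> e \<noteq> {}} + 2 = (\<Sum>x\<in>e. degree E x)"
proof -
  obtain a b where ab: "a \<noteq> b" "e = {a, b}" using simple_graph_edgeE[OF g e] by metis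
  define Da where "Da = {f \<in> E. a \<in> f}"
  define Db where "Db = {f \<in> E. b \<in> f}"
  have fin: "finite Da" "finite Db"
    unfolding Da_def Db_def using simple_graph_finite_edges[OF g] by simp_all
  have "Da \<inter> Db = {e}"
  proof
    show "Da \<inter> Db \<subseteq> {e}"
      unfolding Da_def Db_def using ab
      by (auto elim!: simple_graph_edgeE[OF g] simp: doubleton_eq_iff)
    show "{e} \<subseteq> Da \<inter> Db" unfolding Da_def Db_def using e ab by simp
  qed
  then have "card (Da \<union> Db) + 1 = degree E a + degree E b"
    using card_Un_Int[OF fin] unfolding Da_def Db_def degree_def by simp
  moreover have "card (Da \<union> Db) = Suc (card ((Da \<union> Db) - {e}))"
    using fin e ab unfolding Da_def by (intro card.remove) simp_all
  moreover have "{f \<in> E. f \<noteq> e \<and> f \<inter> e \<noteq> {}} = (Da \<union> Db) - {e}"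
    unfolding Da_def Db_def using ab by auto
  ultimately show ?thesis using ab by simp
qed

lemma degree_Q_edges_Inl:
  assumes "simple_graph V E"
  shows "degree (Q_edges V E) (Inl u) = degree E u"
proof -
  have "degree (Q_edges V E) (Inl u) =
      degree (subdivision_edges E) (Inl u) + degree (line_edges E) (Inl u)"
    using finite_Q_edges[OF assms] unfolding Q_edges_eq
    by (intro degree_Un) (auto simp: subdivision_edges_def line_edges_def)
  then show ?thesis by (simp add: degree_subdivision_edges_Inl degree_line_edges_Inl)
qed

lemma degree_Q_edges_Inr:
  assumes g: "simple_graph V E" and e: "e \<in> E"
  shows "degree (Q_edges V E) (Inr e) = (\<Sum>x\<in>e. degree E x)"
proof -
  have "degree (Q_edges V E) (Inr e) =
      degree (subdivision_edges E) (Inr e) + degree (line_edges E) (Inr e)"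
    using finite_Q_edges[OF g] unfolding Q_edges_eq
    by (intro degree_Un) (auto simp: subdivision_edges_def line_edges_def)
  then show ?thesis
    using card_adjacent_edges[OF g e] simple_graph_card_edge[OF g e]
    by (simp add: degree_subdivision_edges_Inr[OF e] degree_line_edges_Inr[OF e])
qed

lemma degree_vQjoin_edges:
  assumes g1: "simple_graph V1 E1" and g2: "simple_graph V2 E2"
  shows "degree (vQjoin_edges V1 E1 V2 E2) v =
    degree ((`) Inl ` Q_edges V1 E1) v + degree ((`) Inr ` E2) v
    + degree (biclique_edges (Inl ` V1) V2) v"
proof -
  have fin: "finite ((`) Inl ` Q_edges V1 E1)" "finite ((`) Inr ` E2)"
      "finite (biclique_edges (Inl ` V1) V2)"
    using finite_Q_edges[OF g1] simple_graph_finite_edges[OF g2]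
      simple_graph_finite[OF g1] simple_graph_finite[OF g2]
    by (simp_all add: finite_biclique_edges)
  have "vQjoin_edges V1 E1 V2 E2 =
      ((`) Inl ` Q_edges V1 E1 \<union> (`) Inr ` E2) \<union> biclique_edges (Inl ` V1) V2"
    unfolding vQjoin_edges_def biclique_edges_def by blast
  also have "degree \<dots> v = degree ((`) Inl ` Q_edges V1 E1 \<union> (`) Inr ` E2) v
      + degree (biclique_edges (Inl ` V1) V2) v"
    using fin unfolding biclique_edges_def by (intro degree_Un) auto
  also have "degree ((`) Inl ` Q_edges V1 E1 \<union> (`) Inr ` E2) v =
      degree ((`) Inl ` Q_edges V1 E1) v + degree ((`) Inr ` E2) v"
    using fin by (intro degree_Un) auto
  finally show ?thesis .
qed

lemma degree_vQjoin_old_vertex: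
  assumes "simple_graph V1 E1" "simple_graph V2 E2" "u \<in> V1"
  shows "degree (vQjoin_edges V1 E1 V2 E2) (Inl (Inl u)) = degree E1 u + card V2"
proof -
  have "degree ((`) Inr ` E2) (Inl (Inl u)) = 0" by (rule degree_image_outside_range) auto
  then show ?thesis
    using assms by (simp add: degree_vQjoin_edges degree_image_inj degree_Q_edges_Inl
        degree_biclique_edges_Inl)
qed

lemma degree_vQjoin_edge_vertex:
  assumes "simple_graph V1 E1" "simple_graph V2 E2" "e \<in> E1"
  shows "degree (vQjoin_edges V1 E1 V2 E2) (Inl (Inr e)) = (\<Sum>x\<in>e. degree E1 x)"
proof -
  have "degree ((`) Inr ` E2) (Inl (Inr e)) = 0" by (rule degree_image_outside_range) auto
  then show ?thesis
    using assms by (simp add: degree_vQjoin_edges degree_image_inj degree_Q_edges_Inr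
        degree_biclique_edges_Inl image_iff)
qed

lemma degree_vQjoin_right_vertex:
  assumes "simple_graph V1 E1" "simple_graph V2 E2" "w \<in> V2"
  shows "degree (vQjoin_edges V1 E1 V2 E2) (Inr w) = degree E2 w + card V1"
proof -
  have "degree ((`) Inl ` Q_edges V1 E1) (Inr w) = 0" by (rule degree_image_outside_range) auto
  then show ?thesis
    using assms by (simp add: degree_vQjoin_edges degree_image_inj card_image
        degree_biclique_edges_Inr)
qed

lemma sum_degree_plus_cube:
  assumes "simple_graph V E"
  shows "(\<Sum>v\<in>V. (degree E v + n) ^ 3) =
     Fidx V E + 3 * n * M1 V E + 6 * card E * n ^ 2 + card V * n ^ 3"
proof -
  have "(\<Sum>v\<in>V. (degree E v + n) ^ 3) =
      (\<Sum>v\<in>V. degree E v ^ 3) + 3 * n * (\<Sum>v\<in>V. degree E v ^ 2)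
      + 3 * n ^ 2 * (\<Sum>v\<in>V. degree E v) + card V * n ^ 3"
  proof -
    have "(d + n) ^ 3 = d ^ 3 + 3 * n * d ^ 2 + 3 * n ^ 2 * d + n ^ 3" for d :: nat
      by (simp add: power2_eq_square power3_eq_cube algebra_simps)
    then show ?thesis by (simp add: sum.distrib sum_distrib_left)
  qed
  then show ?thesis
    using sum_degree_eq_twice_card_edges[OF assms] unfolding Fidx_def M1_def by simp
qed

lemma sum_edge_degree_sum_cube:
  assumes g: "simple_graph V E"
  shows "(\<Sum>e\<in>E. (\<Sum>x\<in>e. degree E x) ^ 3) = M4 V E + 3 * ReZM V E"
proof -
  have "(\<Sum>e\<in>E. (\<Sum>x\<in>e. degree E x) ^ 3) =
      (\<Sum>e\<in>E. (\<Sum>x\<in>e. degree E x ^ 3) + 3 * ((\<Prod>x\<in>e. degree E x) * (\<Sum>x\<in>e. degree E x)))"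
    by (rule sum.cong, simp, erule simple_graph_edgeE[OF g])
      (simp add: power3_eq_cube algebra_simps)
  also have "\<dots> = (\<Sum>e\<in>E. \<Sum>x\<in>e. degree E x ^ 3) + 3 * ReZM V E"
    by (simp add: sum.distrib sum_distrib_left ReZM_def)
  also have "(\<Sum>e\<in>E. \<Sum>x\<in>e. degree E x ^ 3) = M4 V E"
    unfolding sum_edges_endpoints_eq_sum_degree[OF g] M4_def by (simp add: power_numeral_reduce)
  finally show ?thesis .
qed

theorem theorem5:
  fixes V1 :: "'a set" and E1 :: "'a set set" and V2 :: "'b set" and E2 :: "'b set set"
  assumes "simple_graph V1 E1" and "connected_graph V1 E1"
    and "simple_graph V2 E2" and "connected_graph V2 E2"
  defines "n1 \<equiv> card V1" and "n2 \<equiv> card V2" and "m1 \<equiv> card E1" and "m2 \<equiv> card E2"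
  shows "Fidx (vQjoin_vertices V1 E1 V2) (vQjoin_edges V1 E1 V2 E2) =
    Fidx V1 E1 + Fidx V2 E2 + 3 * n2 * M1 V1 E1 + 3 * n1 * M1 V2 E2 + M4 V1 E1
    + 3 * ReZM V1 E1 + 6 * m1 * n2 ^ 2 + 6 * m2 * n1 ^ 2 + n1 * n2 * (n1 ^ 2 + n2 ^ 2)"
proof -
  note g1 = assms(1) and g2 = assms(3)
  let ?cube = "\<lambda>v. degree (vQjoin_edges V1 E1 V2 E2) v ^ 3"
  have vertices: "vQjoin_vertices V1 E1 V2 = (Inl ` Inl ` V1 \<union> Inl ` Inr ` E1) \<union> Inr ` V2"
    unfolding vQjoin_vertices_def Q_vertices_def by (simp add: image_Un)
  have "Fidx (vQjoin_vertices V1 E1 V2) (vQjoin_edges V1 E1 V2 E2) =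
      sum ?cube (Inl ` Inl ` V1) + sum ?cube (Inl ` Inr ` E1) + sum ?cube (Inr ` V2)"
    unfolding Fidx_def vertices
    using simple_graph_finite[OF g1] simple_graph_finite[OF g2] simple_graph_finite_edges[OF g1]
    by (subst sum.union_disjoint, auto)+
  also have "sum ?cube (Inl ` Inl ` V1) = (\<Sum>u\<in>V1. (degree E1 u + n2) ^ 3)"
    by (simp add: sum.reindex inj_on_def n2_def degree_vQjoin_old_vertex[OF g1 g2])
  also have "sum ?cube (Inl ` Inr ` E1) = (\<Sum>e\<in>E1. (\<Sum>x\<in>e. degree E1 x) ^ 3)"
    by (simp add: sum.reindex inj_on_def degree_vQjoin_edge_vertex[OF g1 g2])
  also have "sum ?cube (Inr ` V2) = (\<Sum>w\<in>V2. (degree E2 w + n1) ^ 3)"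
    by (simp add: sum.reindex n1_def degree_vQjoin_right_vertex[OF g1 g2])
  finally show ?thesis
    unfolding sum_degree_plus_cube[OF g1] sum_degree_plus_cube[OF g2]
      sum_edge_degree_sum_cube[OF g1] n1_def n2_def m1_def m2_def
    by (simp add: algebra_simps power2_eq_square power3_eq_cube)
qed

end
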